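(* Let $(M,d)$ be a metric space and let $T:M\to M$ be a surjective uniformly asymptotically regular mapping. Then $T$ is the identity mapping on $M$.
   Context: A mapping $T:M\to M$ on a metric space $(M,d)$ is uniformly asymptotically regular (UAR) if $\lim_{n\to\infty}\sup_{x\in M} d(T^{n+1}x,T^{n}x)=0$, where $T^n$ is the $n$-fold composition of $T$. *)

theory Defs
  imports "HOL-Analysis.Analysis"
begin

text \<open>Uniform asymptotic regularity: the supremum over all points of
  d(T^(n+1) x, T^n x) tends to 0. The supremum is taken in the extended reals,
  so that it is meaningful even when the set of distances is unbounded.\<close>
definition uar :: "('a::metric_space \<Rightarrow> 'a) \<Rightarrow> bool" where
  "uar T \<longleftrightarrow>
     ((\<lambda>n. SUP x. ereal (dist ((T ^^ Suc n) x) ((T ^^ n) x))) \<longlonglongrightarrow> 0)"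

end

theory Submission
  imports Defs
begin

text \<open>For surjective \<open>T\<close> each iterate \<open>T ^^ n\<close> is surjective as well, so the
  supremum of \<open>d(T^(n+1) x, T^n x)\<close> over \<open>x\<close> is the supremum of \<open>d(T y, y)\<close>
  over \<open>y = T^n x\<close>: the sequence in the definition of uniform asymptotic
  regularity is constant, hence identically 0, and every displacement vanishes.\<close>

lemma SUP_iterate_displacement_surj:
  fixes T :: "'a::metric_space \<Rightarrow> 'a"
  assumes "surj T"
  shows "(SUP x. ereal (dist ((T ^^ Suc n) x) ((T ^^ n) x))) = (SUP y. ereal (dist (T y) y))"
proof -
  have "surj (T ^^ n)" using assms by (simp add: surj_fn)
  have "(SUP x. ereal (dist ((T ^^ Suc n) x) ((T ^^ n) x)))
      = (SUP y\<in>range (T ^^ n). ereal (dist (T y) y))"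
    by (simp add: image_image)
  also have "\<dots> = (SUP y. ereal (dist (T y) y))" using \<open>surj (T ^^ n)\<close> by simp
  finally show ?thesis .
qed

lemma uar_surj_SUP_displacement_eq_0:
  fixes T :: "'a::metric_space \<Rightarrow> 'a"
  assumes "surj T" and "uar T"
  shows "(SUP y. ereal (dist (T y) y)) = 0"
proof -
  have "(\<lambda>n::nat. SUP y. ereal (dist (T y) y)) \<longlonglongrightarrow> 0"
    using assms(2) unfolding uar_def SUP_iterate_displacement_surj[OF assms(1)] .
  then show ?thesis by (simp add: LIMSEQ_const_iff)
qed

theorem proposition2p2:
  fixes T :: "'a::metric_space \<Rightarrow> 'a"
  assumes "surj T" and "uar T"
  shows "T = id"
proof
  fix y
  have "ereal (dist (T y) y) \<le> (SUP y. ereal (dist (T y) y))"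
    by (rule SUP_upper) simp
  then have "dist (T y) y \<le> 0"
    using uar_surj_SUP_displacement_eq_0[OF assms] by simp
  then show "T y = id y" by simp
qed

end
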